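(* Let $E\in\{E_0,E_{1728}\}$ and let $\varphi\in\operatorname{Aut}(E)$ with $\varphi\neq[\pm1]$. If $\theta\in\operatorname{End}(E)$ is non-zero and satisfies $\bar\varphi\theta=\theta\varphi$, then $\deg\theta\ge p$.
   Context: $E_0:y^2=x^3-1$ over $\overline{\mathbb{F}}_p$ with $p\equiv2\pmod3$, and $E_{1728}:y^2=x^3-x$ over $\overline{\mathbb{F}}_p$ with $p\equiv3\pmod4$ (so that the curve in question is supersingular). $\bar\varphi$ denotes the dual (conjugate) of $\varphi$, i.e. $\bar\varphi=\varphi^{-1}$. *)

theory Defs
  imports "HOL-Computational_Algebra.Computational_Algebra"
begin

datatype 'a ecpt = Infty | Pt 'a 'a

definition on_curve :: "'a::field \<Rightarrow> 'a \<Rightarrow> 'a ecpt \<Rightarrow> bool" where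
  "on_curve a b P = (case P of Infty \<Rightarrow> True | Pt x y \<Rightarrow> y^2 = x^3 + a*x + b)"

definition ec_neg :: "'a::field ecpt \<Rightarrow> 'a ecpt" where
  "ec_neg P = (case P of Infty \<Rightarrow> Infty | Pt x y \<Rightarrow> Pt x (-y))"

(* chord-tangent group law (valid in characteristic <> 2) *)
fun ec_add :: "'a::field \<Rightarrow> 'a \<Rightarrow> 'a ecpt \<Rightarrow> 'a ecpt \<Rightarrow> 'a ecpt" where
  "ec_add a b Infty Q = Q"
| "ec_add a b (Pt x1 y1) Infty = Pt x1 y1"
| "ec_add a b (Pt x1 y1) (Pt x2 y2) =
     (if x1 = x2 then
        (if y1 = - y2 then Infty
         else (let l = (3 * x1^2 + a) / (2 * y1);
                   x3 = l^2 - 2 * x1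
               in Pt x3 (l * (x1 - x3) - y1)))
      else (let l = (y2 - y1) / (x2 - x1);
                x3 = l^2 - x1 - x2
            in Pt x3 (l * (x1 - x3) - y1)))"

(* Standard form of an endomorphism (Washington, Elliptic Curves, Sect. 2.9):
   alpha(x,y) = (r1(x), y r2(x)) with r1 = p/q in lowest terms, r2 = u/v;
   alpha(x,y) = O exactly when q(x) = 0. *)
definition endo_rep :: "'a::field \<Rightarrow> 'a \<Rightarrow> ('a ecpt \<Rightarrow> 'a ecpt)
     \<Rightarrow> 'a poly \<Rightarrow> 'a poly \<Rightarrow> 'a poly \<Rightarrow> 'a poly \<Rightarrow> bool" where
  "endo_rep a b \<theta> p q u v \<longleftrightarrow> coprime p q \<and>
     (\<forall>x y. on_curve a b (Pt x y) \<longrightarrow>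
        (poly q x \<noteq> 0 \<longrightarrow> poly v x \<noteq> 0) \<and>
        \<theta> (Pt x y) = (if poly q x = 0 then Infty
                      else Pt (poly p x / poly q x) (y * poly u x / poly v x)))"

definition is_endo :: "'a::field \<Rightarrow> 'a \<Rightarrow> ('a ecpt \<Rightarrow> 'a ecpt) \<Rightarrow> bool" where
  "is_endo a b \<theta> \<longleftrightarrow>
     (\<forall>P. on_curve a b P \<longrightarrow> on_curve a b (\<theta> P)) \<and>
     (\<forall>P Q. on_curve a b P \<longrightarrow> on_curve a b Q \<longrightarrow>
        \<theta> (ec_add a b P Q) = ec_add a b (\<theta> P) (\<theta> Q)) \<and>
     (\<exists>p q u v. endo_rep a b \<theta> p q u v)"

definition ec_deg :: "'a::field \<Rightarrow> 'a \<Rightarrow> ('a ecpt \<Rightarrow> 'a ecpt) \<Rightarrow> nat" where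
  "ec_deg a b \<theta> = (THE n. \<exists>p q u v. endo_rep a b \<theta> p q u v \<and> n = max (degree p) (degree q))"

definition algebraic_over_prime_field :: "'a::field itself \<Rightarrow> bool" where
  "algebraic_over_prime_field _ \<longleftrightarrow>
     (\<forall>x::'a. \<exists>P. P \<noteq> 0 \<and> (\<forall>i. coeff P i \<in> range of_nat) \<and> poly P x = 0)"

end

theory Submission
  imports Defs
begin

(* The automorphism phi <> [+-1] acts as (x, y) |-> (alpha x, tau y) with alpha^3 = tau^2 and
   alpha <> 1. Write theta(x, y) = (p/q, y u/v) in lowest terms. The pullback of the invariant
   differential dx/y is h dx/y with h = W v / (q^2 u), where W = p' q - p q' is the numerator of
   (p/q)'; comparing orders of roots and degrees shows that h is a constant. The relation
   phibar theta = theta phi makes p/q and u/v eigenfunctions of the dilation x |-> alpha x, and the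
   two sides of W v = h q^2 u then scale by factors that differ unless tau^2 = alpha^2, i.e.
   alpha = 1. Hence h = 0, so (p/q)' = 0 and p, q have zero derivative: theta is inseparable,
   and one of p, q has degree at least the characteristic. *)

section \<open>Polynomials over an algebraically closed field\<close>

(* For a general field 'a, the type 'a poly is not an instance of the gcd classes, so the
   coprimality facts used below are derived from roots instead. *)

lemma alg_closed_field_infinite: "infinite (UNIV :: 'a::alg_closed_field set)"
proof
  assume fin: "finite (UNIV :: 'a set)"
  define W :: "'a poly" where "W = (\<Prod>x\<in>UNIV. [:-x, 1:]) + 1"
  have "degree (\<Prod>x\<in>(UNIV::'a set). [:-x, 1:]) = card (UNIV::'a set)"
    by (subst degree_prod_eq_sum_degree) auto
  moreover have "card (UNIV::'a set) > 0"
    using fin by (simp add: finite_UNIV_card_ge_0)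
  ultimately have "degree W > 0"
    unfolding W_def by (metis degree_add_eq_left degree_1)
  then obtain x where "poly W x = 0"
    using alg_closed_imp_poly_has_root by blast
  moreover have "poly (\<Prod>x\<in>UNIV. [:-x, 1:]) x = 0"
    using fin by (simp add: poly_prod)
  ultimately show False
    by (simp add: W_def)
qed

lemma alg_closed_poly_all_0_iff_0: "(\<forall>x. poly p x = 0) \<longleftrightarrow> p = 0"
  for p :: "'a::alg_closed_field poly"
proof
  assume "\<forall>x. poly p x = 0"
  then have "{x. poly p x = 0} = UNIV"
    by auto
  then show "p = 0"
    using poly_roots_finite alg_closed_field_infinite by metis
qed simp

lemma alg_closed_poly_eqI:
  fixes p q w :: "'a::alg_closed_field poly"
  assumes "w \<noteq> 0" and "\<And>x. poly w x \<noteq> 0 \<Longrightarrow> poly p x = poly q x"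
  shows "p = q"
proof -
  have "\<forall>x. poly ((p - q) * w) x = 0"
    using assms(2) by auto
  then have "(p - q) * w = 0"
    by (simp only: alg_closed_poly_all_0_iff_0)
  with assms(1) show ?thesis
    by simp
qed

lemma alg_closed_coprime_iff_no_common_root:
  fixes p q :: "'a::alg_closed_field poly"
  shows "coprime p q \<longleftrightarrow> (\<forall>x. poly p x \<noteq> 0 \<or> poly q x \<noteq> 0)"
proof
  assume "coprime p q"
  show "\<forall>x. poly p x \<noteq> 0 \<or> poly q x \<noteq> 0"
  proof (rule allI, rule ccontr)
    fix x
    assume "\<not> (poly p x \<noteq> 0 \<or> poly q x \<noteq> 0)"
    then have "[:-x, 1:] dvd p" "[:-x, 1:] dvd q"
      by (simp_all add: poly_eq_0_iff_dvd)
    with \<open>coprime p q\<close> have "is_unit [:-x, 1:]"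
      by (rule coprime_common_divisor)
    then show False
      by (simp add: is_unit_iff_degree)
  qed
next
  assume no_common: "\<forall>x. poly p x \<noteq> 0 \<or> poly q x \<noteq> 0"
  show "coprime p q"
  proof (rule coprimeI)
    fix d
    assume d: "d dvd p" "d dvd q"
    have "d \<noteq> 0"
      using d no_common by auto
    moreover have "degree d = 0"
    proof (rule ccontr)
      assume "degree d \<noteq> 0"
      then obtain x where "poly d x = 0"
        using alg_closed_imp_poly_has_root by blast
      then have "[:-x, 1:] dvd p" "[:-x, 1:] dvd q"
        using d by (auto simp: poly_eq_0_iff_dvd intro: dvd_trans)
      then have "poly p x = 0" "poly q x = 0"
        by (simp_all add: poly_eq_0_iff_dvd)
      with no_common show False
        by blast
    qed
    ultimately show "is_unit d"
      by (simp add: is_unit_iff_degree)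
  qed
qed

lemma alg_closed_dvd_if_order_le:
  fixes p q :: "'a::alg_closed_field poly"
  assumes "p \<noteq> 0" and "q \<noteq> 0" and "\<And>x. order x p \<le> order x q"
  shows "p dvd q"
  using assms
proof (induction "degree p" arbitrary: p q rule: less_induct)
  case less
  show ?case
  proof (cases "degree p = 0")
    case True
    with less.prems(1) show ?thesis
      by (simp add: is_unit_iff_degree unit_imp_dvd)
  next
    case False
    then obtain x where "poly p x = 0"
      using alg_closed_imp_poly_has_root by blast
    then obtain p' where p: "p = [:-x, 1:] * p'"
      by (auto simp: poly_eq_0_iff_dvd elim: dvdE)
    have "order x q \<noteq> 0"
      using less.prems \<open>poly p x = 0\<close> order_root[of p x] by (metis le_zero_eq)
    then obtain q' where q: "q = [:-x, 1:] * q'"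
      using less.prems(2) order_root[of q x] by (auto simp: poly_eq_0_iff_dvd elim: dvdE)
    have nz: "p' \<noteq> 0" "q' \<noteq> 0"
      using less.prems p q by auto
    have "degree p = degree [:-x, 1:] + degree p'"
      unfolding p by (rule degree_mult_eq) (use nz in auto)
    then have "degree p' < degree p"
      by simp
    moreover have "order y p' \<le> order y q'" for y
    proof -
      have "order y p = order y [:-x, 1:] + order y p'"
        using less.prems(1) unfolding p by (rule order_mult)
      moreover have "order y q = order y [:-x, 1:] + order y q'"
        using less.prems(2) unfolding q by (rule order_mult)
      ultimately show ?thesis
        using less.prems(3)[of y] by linarith
    qed
    ultimately have "p' dvd q'"
      using less.hyps[of p' q'] nz by simp
    then show ?thesis
      unfolding p q by (rule mult_dvd_mono[OF dvd_refl])
  qed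
qed

lemma alg_closed_coprime_dvd_mult_cancel:
  fixes a b c :: "'a::alg_closed_field poly"
  assumes "coprime a c" and "a dvd b * c"
  shows "a dvd b"
proof (cases "b = 0 \<or> c = 0")
  case True
  with assms(1) show ?thesis
    by (auto intro: unit_imp_dvd)
next
  case False
  then have "b * c \<noteq> 0" and "a \<noteq> 0"
    using assms(2) by auto
  show ?thesis
  proof (rule alg_closed_dvd_if_order_le)
    fix x
    have "order x a \<le> order x b + order x c"
      using assms(2) \<open>b * c \<noteq> 0\<close> dvd_imp_order_le order_mult by metis
    moreover have "order x a = 0 \<or> order x c = 0"
      using assms(1) by (metis alg_closed_coprime_iff_no_common_root order_0I)
    ultimately show "order x a \<le> order x b"
      by linarith
  qed (use False \<open>a \<noteq> 0\<close> in auto)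
qed

lemma alg_closed_mult_dvd_if_coprime:
  fixes a b c :: "'a::alg_closed_field poly"
  assumes "coprime a b" and "a dvd c" and "b dvd c"
  shows "a * b dvd c"
proof -
  from assms(3) obtain d where c: "c = b * d"
    by (elim dvdE)
  with assms(1,2) have "a dvd d"
    by (metis alg_closed_coprime_dvd_mult_cancel mult.commute)
  with c show ?thesis
    by (simp add: mult.commute mult_dvd_mono)
qed

lemma alg_closed_coprime_factorization:
  fixes u v :: "'a::alg_closed_field poly"
  assumes "v \<noteq> 0"
  obtains g u' v' where "g \<noteq> 0" "u = g * u'" "v = g * v'" "coprime u' v'"
  using assms
proof (induction "degree v" arbitrary: u v thesis rule: less_induct)
  case less
  show ?case
  proof (cases "coprime u v")
    case True
    then show ?thesis
      using less.prems(1)[of 1 u v] by simp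
  next
    case False
    then obtain x where "poly u x = 0" "poly v x = 0"
      by (auto simp: alg_closed_coprime_iff_no_common_root)
    then obtain u1 v1 where u: "u = [:-x, 1:] * u1" and v: "v = [:-x, 1:] * v1"
      by (auto simp: poly_eq_0_iff_dvd elim!: dvdE)
    have "v1 \<noteq> 0"
      using v less.prems(2) by auto
    then have "degree v = degree [:-x, 1:] + degree v1"
      unfolding v by (intro degree_mult_eq) auto
    then have "degree v1 < degree v"
      by simp
    obtain g u' v' where "g \<noteq> 0" "u1 = g * u'" "v1 = g * v'" "coprime u' v'"
      using less.hyps[OF \<open>degree v1 < degree v\<close>] \<open>v1 \<noteq> 0\<close> by blast
    show ?thesis
    proof (rule less.prems(1))
      show "[:-x, 1:] * g \<noteq> 0"
        using \<open>g \<noteq> 0\<close> by (simp del: mult_pCons_left)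
      show "u = [:-x, 1:] * g * u'" "v = [:-x, 1:] * g * v'"
        using u v \<open>u1 = g * u'\<close> \<open>v1 = g * v'\<close> by (simp_all only: mult.assoc)
    qed fact
  qed
qed

lemma eq_smult_if_dvd_degree_le:
  fixes p q :: "'a::field poly"
  assumes "p dvd q" and "p \<noteq> 0" and "degree q \<le> degree p"
  obtains c where "q = smult c p"
proof -
  from assms(1) obtain r where q: "q = p * r"
    by (elim dvdE)
  show ?thesis
  proof (cases "r = 0")
    case False
    with assms(2,3) have "degree r = 0"
      by (simp add: q degree_mult_eq)
    then obtain c where "r = [:c:]"
      by (rule degree_eq_zeroE)
    with q that show ?thesis
      by simp
  qed (use q that[of 0] in \<open>simp\<close>)
qed

lemma fraction_degrees_unique:
  fixes p q p' q' :: "'a::alg_closed_field poly"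
  assumes "coprime p q" and "coprime p' q'" and "q \<noteq> 0" and "q' \<noteq> 0"
    and "p * q' = p' * q"
  shows "degree p = degree p'" and "degree q = degree q'"
proof -
  have "q dvd q' * p"
    using assms(5) by (metis dvd_triv_right mult.commute)
  then have "q dvd q'"
    using assms(1) by (metis alg_closed_coprime_dvd_mult_cancel coprime_commute)
  moreover have "q' dvd q * p'"
    using assms(5) by (metis dvd_triv_right mult.commute)
  then have "q' dvd q"
    using assms(2) by (metis alg_closed_coprime_dvd_mult_cancel coprime_commute)
  ultimately show deg_q: "degree q = degree q'"
    using assms(3,4) by (simp add: dvd_imp_degree_le le_antisym)
  show "degree p = degree p'"
  proof (cases "p = 0")
    case False
    with assms(3-5) have "p' \<noteq> 0"
      by auto
    have "degree (p * q') = degree (p' * q)"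
      by (simp only: assms(5))
    with False \<open>p' \<noteq> 0\<close> assms(3,4) deg_q show ?thesis
      by (simp add: degree_mult_eq)
  qed (use assms(3-5) in simp)
qed

lemma order_power: "p \<noteq> 0 \<Longrightarrow> order x (p ^ n) = n * order x p"
  for p :: "'a::idom poly"
  by (induction n) (simp_all add: order_mult)

section \<open>Derivatives and the Wronskian\<close>

lemma power_dvd_pderiv:
  fixes p d :: "'a::idom poly"
  assumes "d ^ k dvd p"
  shows "d ^ (k - 1) dvd pderiv p"
proof (cases k)
  case (Suc j)
  from assms obtain r where p: "p = d ^ Suc j * r"
    by (auto simp: Suc elim: dvdE)
  have "pderiv p = d ^ Suc j * pderiv r + r * (smult (of_nat (Suc j)) (d ^ j) * pderiv d)"
    unfolding p pderiv_mult pderiv_power_Suc ..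
  also have "\<dots> = d ^ j * (d * pderiv r + r * smult (of_nat (Suc j)) (pderiv d))"
    by (simp only: power_Suc2) (simp add: algebra_simps)
  finally show ?thesis
    by (simp add: Suc)
qed simp

lemma degree_pderiv_less: "pderiv p \<noteq> 0 \<Longrightarrow> degree (pderiv p) < degree p"
proof (cases "degree p")
  case 0
  then show "pderiv p \<noteq> 0 \<Longrightarrow> ?thesis"
    by (metis degree_eq_zeroE pderiv.simps pderiv_0)
next
  case (Suc n)
  have "degree (pderiv p) \<le> degree p - 1"
    by (rule degree_le) (auto simp: coeff_pderiv coeff_eq_0)
  with Suc show ?thesis
    by simp
qed

lemma CHAR_le_degree_if_pderiv_eq_0:
  fixes p :: "'a::field poly"
  assumes "pderiv p = 0" and "degree p \<noteq> 0"
  shows "CHAR('a) \<le> degree p"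
proof -
  obtain j where j: "degree p = Suc j"
    using assms(2) not0_implies_Suc by blast
  then have "p \<noteq> 0"
    by auto
  have "of_nat (Suc j) * lead_coeff p = coeff (pderiv p) j"
    by (simp add: coeff_pderiv j)
  with assms(1) have "of_nat (Suc j) * lead_coeff p = 0"
    by simp
  moreover have "lead_coeff p \<noteq> 0"
    using \<open>p \<noteq> 0\<close> by simp
  ultimately have "of_nat (degree p) = (0::'a)"
    by (simp add: j del: of_nat_Suc)
  then have "CHAR('a) dvd degree p"
    by (simp add: of_nat_eq_0_iff_char_dvd)
  with j show ?thesis
    by (simp add: dvd_imp_le)
qed

(* (p/q)' = wronskian p q / q^2 *)
definition wronskian :: "'a::idom poly \<Rightarrow> 'a poly \<Rightarrow> 'a poly" where
  "wronskian p q = pderiv p * q - p * pderiv q"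

lemma wronskian_smult: "wronskian (smult a p) (smult b q) = smult (a * b) (wronskian p q)"
  by (simp add: wronskian_def pderiv_smult smult_diff_right mult_ac)

lemma degree_wronskian_less:
  fixes p q :: "'a::idom poly"
  assumes "wronskian p q \<noteq> 0"
  shows "degree (wronskian p q) < degree p + degree q"
proof -
  have "degree (pderiv p * q) < degree p + degree q \<or> pderiv p = 0"
    using degree_mult_le[of "pderiv p" q] degree_pderiv_less[of p] by fastforce
  moreover have "degree (p * pderiv q) < degree p + degree q \<or> pderiv q = 0"
    using degree_mult_le[of p "pderiv q"] degree_pderiv_less[of q] by fastforce
  ultimately show ?thesis
    using assms degree_diff_le_max[of "pderiv p * q" "p * pderiv q"]
    by (auto simp: wronskian_def)
qed

lemma wronskian_pcompose_scale:
  "wronskian (p \<circ>\<^sub>p [:0, c:]) (q \<circ>\<^sub>p [:0, c:]) = smult c (wronskian p q \<circ>\<^sub>p [:0, c:])"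
  by (simp add: wronskian_def pderiv_pcompose pcompose_diff pcompose_mult pderiv_pCons
      smult_diff_right mult_ac)

lemma pderiv_eq_0_if_wronskian_eq_0:
  fixes p q :: "'a::alg_closed_field poly"
  assumes "coprime p q" and "q \<noteq> 0" and "wronskian p q = 0"
  shows "pderiv p = 0" and "pderiv q = 0"
proof -
  have "coprime q p"
    using assms(1) by (simp add: coprime_commute)
  moreover have "q dvd pderiv q * p"
    using assms(3) by (metis wronskian_def right_minus_eq dvd_triv_right mult.commute)
  ultimately have "q dvd pderiv q"
    by (rule alg_closed_coprime_dvd_mult_cancel)
  then show "pderiv q = 0"
    using dvd_imp_degree_le degree_pderiv_less leD by blast
  with assms(2,3) show "pderiv p = 0"
    by (simp add: wronskian_def)
qed

lemma CHAR_le_degree_if_wronskian_eq_0: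
  fixes p q :: "'a::alg_closed_field poly"
  assumes "coprime p q" and "q \<noteq> 0" and "wronskian p q = 0"
    and "degree p \<noteq> 0 \<or> degree q \<noteq> 0"
  shows "CHAR('a) \<le> max (degree p) (degree q)"
  using pderiv_eq_0_if_wronskian_eq_0[OF assms(1-3)] assms(4) CHAR_le_degree_if_pderiv_eq_0
  by (metis le_max_iff_disj)

lemma square_dvd_wronskian_mult:
  fixes p q v :: "'a::alg_closed_field poly"
  assumes "q ^ 3 dvd v ^ 2"
  shows "q ^ 2 dvd wronskian p q * v"
proof (cases "wronskian p q * v = 0")
  case False
  then have "v \<noteq> 0"
    by auto
  with assms have "q \<noteq> 0"
    by auto
  show ?thesis
  proof (rule alg_closed_dvd_if_order_le)
    fix x :: 'a
    define X where "X = [:-x, 1:]"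
    define k where "k = order x q"
    have "order x (q ^ 3) \<le> order x (v ^ 2)"
      using assms \<open>v \<noteq> 0\<close> by (simp add: dvd_imp_order_le)
    then have "3 * k \<le> 2 * order x v"
      using \<open>q \<noteq> 0\<close> \<open>v \<noteq> 0\<close> by (simp add: order_power k_def)
    have "X ^ (2 * k) dvd wronskian p q * v"
    proof (cases "k = 0")
      case False
      have "X ^ k dvd q"
        by (simp add: X_def k_def order_1)
      moreover have "k + 1 \<le> order x v"
        using \<open>3 * k \<le> 2 * order x v\<close> False by linarith
      then have "X ^ (k + 1) dvd v"
        unfolding X_def order_divides by blast
      ultimately have "X ^ (k + (k + 1)) dvd q * v" "X ^ (k - 1 + (k + 1)) dvd pderiv q * v"
        unfolding power_add by (simp_all only: mult_dvd_mono power_dvd_pderiv)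
      moreover have "k + (k + 1) = 2 * k + 1" "k - 1 + (k + 1) = 2 * k"
        using False by simp_all
      ultimately have "X ^ (2 * k) dvd q * v" "X ^ (2 * k) dvd pderiv q * v"
        by (simp_all add: mult_2) (blast dest: dvd_mult_right)
      then have "X ^ (2 * k) dvd pderiv p * (q * v) - p * (pderiv q * v)"
        by (simp add: dvd_diff)
      then show ?thesis
        by (simp add: wronskian_def left_diff_distrib mult.assoc)
    qed simp
    then show "order x (q ^ 2) \<le> order x (wronskian p q * v)"
      using False \<open>q \<noteq> 0\<close> by (simp add: X_def order_divides order_power k_def)
  qed (use False \<open>q \<noteq> 0\<close> in simp_all)
qed (metis dvd_0_right)

(* The equation says (p/q)(c x) = k (p/q)(x), cleared of denominators. *)
lemma pcompose_scale_eigen: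
  fixes p q :: "'a::alg_closed_field poly"
  assumes "coprime p q" and "q \<noteq> 0" and "c \<noteq> 0" and "k \<noteq> 0"
    and "p \<circ>\<^sub>p [:0, c:] * q = smult k (p * q \<circ>\<^sub>p [:0, c:])"
  obtains l where "l \<noteq> 0" "q \<circ>\<^sub>p [:0, c:] = smult l q" "p \<circ>\<^sub>p [:0, c:] = smult (k * l) p"
proof -
  have "q dvd smult k (p * q \<circ>\<^sub>p [:0, c:])"
    by (simp flip: assms(5))
  with assms(4) have "q dvd q \<circ>\<^sub>p [:0, c:] * p"
    by (simp add: dvd_smult_cancel mult.commute)
  moreover have "coprime q p"
    using assms(1) by (simp add: coprime_commute)
  ultimately have dvd: "q dvd q \<circ>\<^sub>p [:0, c:]"
    by (rule alg_closed_coprime_dvd_mult_cancel[rotated])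
  have deg: "degree (q \<circ>\<^sub>p [:0, c:]) = degree q"
    using assms(3) by (simp add: degree_pcompose)
  obtain l where l: "q \<circ>\<^sub>p [:0, c:] = smult l q"
    by (rule eq_smult_if_dvd_degree_le[OF dvd assms(2)]) (simp add: deg)
  have "q \<circ>\<^sub>p [:0, c:] \<noteq> 0"
    using assms(2,3) by (simp add: pcompose_eq_0_iff)
  with l have "l \<noteq> 0"
    by auto
  moreover have "p \<circ>\<^sub>p [:0, c:] * q = smult (k * l) p * q"
    using assms(5) by (simp add: l mult.commute)
  then have "p \<circ>\<^sub>p [:0, c:] = smult (k * l) p"
    using assms(2) mult_right_cancel by blast
  ultimately show ?thesis
    using l that by blast
qed

lemma pcompose_scale_ratio_eq_1:
  fixes p q :: "'a::field poly"
  assumes "p \<circ>\<^sub>p [:0, c:] * q = smult k (p * q \<circ>\<^sub>p [:0, c:])"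
    and "p \<noteq> 0" and "q \<noteq> 0" and "c \<noteq> 0" and "degree p = degree q"
  shows "k = 1"
proof -
  have "p \<circ>\<^sub>p [:0, c:] * q \<noteq> 0"
    using assms(2-4) by (simp add: pcompose_eq_0_iff)
  with assms(1) have "k \<noteq> 0"
    by auto
  have "lead_coeff (p \<circ>\<^sub>p [:0, c:] * q) = lead_coeff (smult k (p * q \<circ>\<^sub>p [:0, c:]))"
    by (simp only: assms(1))
  moreover have "coeff p (degree q) \<noteq> 0"
    using assms(2) by (simp flip: assms(5))
  ultimately show ?thesis
    using assms(3-5) \<open>k \<noteq> 0\<close> by (simp add: lead_coeff_mult lead_coeff_comp)
qed

section \<open>The Weierstrass cubic\<close>

definition ec_cubic :: "'a::comm_ring_1 \<Rightarrow> 'a \<Rightarrow> 'a poly" where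
  "ec_cubic a b = [:b, a, 0, 1:]"

lemma poly_ec_cubic [simp]: "poly (ec_cubic a b) x = x ^ 3 + a * x + b"
  by (simp add: ec_cubic_def algebra_simps power3_eq_cube)

lemma degree_ec_cubic [simp]: "degree (ec_cubic a b) = 3"
  and ec_cubic_neq_0 [simp]: "ec_cubic a b \<noteq> 0"
  by (simp_all add: ec_cubic_def)

(* q^3 f(p/q) for the cubic f = ec_cubic a b. *)
definition ec_cubic_hom :: "'a::comm_ring_1 \<Rightarrow> 'a \<Rightarrow> 'a poly \<Rightarrow> 'a poly \<Rightarrow> 'a poly" where
  "ec_cubic_hom a b p q = p ^ 3 + [:a:] * p * q ^ 2 + [:b:] * q ^ 3"

lemma poly_ec_cubic_hom [simp]:
  "poly (ec_cubic_hom a b p q) x = poly p x ^ 3 + a * poly p x * poly q x ^ 2 + b * poly q x ^ 3"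
  by (simp add: ec_cubic_hom_def)

(* Euler's relation for the cubic form X^3 + a X Z^2 + b Z^3, with X-derivative 3 X^2 + a Z^2. *)
lemma ec_cubic_hom_euler:
  fixes p q :: "'a::idom poly"
  shows "q * pderiv (ec_cubic_hom a b p q) - 3 * (pderiv q * ec_cubic_hom a b p q)
    = (3 * p ^ 2 + [:a:] * q ^ 2) * wronskian p q"
proof -
  have identity:
    "q * pderiv (p ^ 3 + A * p * q ^ 2 + B * q ^ 3)
        - 3 * (pderiv q * (p ^ 3 + A * p * q ^ 2 + B * q ^ 3))
      = (3 * p ^ 2 + A * q ^ 2) * wronskian p q"
    if "pderiv A = 0" and "pderiv B = 0" for A B
    using that by (simp add: wronskian_def pderiv_add pderiv_mult power2_eq_square power3_eq_cube
        algebra_simps)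
  show ?thesis
    unfolding ec_cubic_hom_def by (rule identity) (simp_all add: pderiv_pCons)
qed

lemma ec_cubic_double_root:
  fixes a b t :: "'a::field"
  assumes "t ^ 3 + a * t + b = 0" and "3 * t ^ 2 + a = 0"
  shows "4 * a ^ 3 + 27 * b ^ 2 = 0"
  using assms by algebra

lemma coprime_ec_cubic_hom:
  fixes p q :: "'a::alg_closed_field poly"
  assumes "coprime p q" and "4 * a ^ 3 + 27 * b ^ 2 \<noteq> 0"
  shows "coprime q (ec_cubic_hom a b p q)"
    and "coprime (ec_cubic_hom a b p q) (3 * p ^ 2 + [:a:] * q ^ 2)"
proof -
  have p_at_root_q: "poly p x \<noteq> 0" if "poly q x = 0" for x
    using assms(1) that by (auto simp: alg_closed_coprime_iff_no_common_root)
  then show "coprime q (ec_cubic_hom a b p q)"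
    by (auto simp: alg_closed_coprime_iff_no_common_root)
  show "coprime (ec_cubic_hom a b p q) (3 * p ^ 2 + [:a:] * q ^ 2)"
    unfolding alg_closed_coprime_iff_no_common_root
  proof
    fix x
    show "poly (ec_cubic_hom a b p q) x \<noteq> 0 \<or> poly (3 * p ^ 2 + [:a:] * q ^ 2) x \<noteq> 0"
    proof (cases "poly q x = 0")
      case False
      define t where "t = poly p x / poly q x"
      have "poly p x = t * poly q x"
        using False by (simp add: t_def)
      then have "poly (ec_cubic_hom a b p q) x = poly q x ^ 3 * (t ^ 3 + a * t + b)"
        and "poly (3 * p ^ 2 + [:a:] * q ^ 2) x = poly q x ^ 2 * (3 * t ^ 2 + a)"
        by (simp_all add: algebra_simps power2_eq_square power3_eq_cube)
      with False ec_cubic_double_root[of t a b] assms(2) show ?thesis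
        by auto
    qed (use p_at_root_q in simp)
  qed
qed

lemma degree_ec_cubic_hom_gt:
  fixes p q :: "'a::idom poly"
  assumes "degree p \<noteq> degree q" and "b \<noteq> 0 \<or> a \<noteq> 0 \<and> p \<noteq> 0"
  shows "2 * degree p + degree q < degree (ec_cubic_hom a b p q)"
proof -
  have deg_pow: "degree (r ^ n) = n * degree r" for r :: "'a poly" and n
    by (cases "r = 0") (simp_all add: degree_power_eq power_0_left)
  have deg_A: "degree (p ^ 3) = 3 * degree p"
    by (rule deg_pow)
  have deg_B: "degree ([:a:] * p * q ^ 2) \<le> degree p + 2 * degree q"
    using degree_mult_le[of "[:a:] * p" "q ^ 2"] degree_mult_le[of "[:a:]" p] by (simp add: deg_pow)
  have deg_C: "degree ([:b:] * q ^ 3) \<le> 3 * degree q"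
    using degree_mult_le[of "[:b:]" "q ^ 3"] by (simp add: deg_pow)
  show ?thesis
  proof (cases "degree q < degree p")
    case True
    then have "degree ([:a:] * p * q ^ 2 + [:b:] * q ^ 3) < degree (p ^ 3)"
      using deg_A deg_B deg_C degree_add_le_max[of "[:a:] * p * q ^ 2" "[:b:] * q ^ 3"] by linarith
    then have "degree (ec_cubic_hom a b p q) = 3 * degree p"
      by (simp add: ec_cubic_hom_def add.assoc degree_add_eq_left deg_A)
    with True show ?thesis
      by simp
  next
    case False
    with assms(1) have less: "degree p < degree q"
      by simp
    then have "q \<noteq> 0"
      by auto
    show ?thesis
    proof (cases "b = 0")
      case False
      then have "degree ([:b:] * q ^ 3) = 3 * degree q"
        using \<open>q \<noteq> 0\<close> by (simp add: deg_pow)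
      moreover have "degree (p ^ 3 + [:a:] * p * q ^ 2) < 3 * degree q"
        using less deg_A deg_B degree_add_le_max[of "p ^ 3" "[:a:] * p * q ^ 2"] by linarith
      ultimately have "degree (ec_cubic_hom a b p q) = 3 * degree q"
        by (simp add: ec_cubic_hom_def degree_add_eq_right)
      with less show ?thesis
        by simp
    next
      case True
      with assms(2) have "a \<noteq> 0" and "p \<noteq> 0"
        by simp_all
      then have "degree ([:a:] * p * q ^ 2) = degree p + 2 * degree q"
        using \<open>q \<noteq> 0\<close> by (simp add: degree_mult_eq deg_pow)
      moreover have "degree (p ^ 3) < degree p + 2 * degree q"
        using less deg_A by linarith
      ultimately have "degree (ec_cubic_hom a b p q) = degree p + 2 * degree q"
        using True by (simp add: ec_cubic_hom_def degree_add_eq_right)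
      with less show ?thesis
        by simp
    qed
  qed
qed

lemma ec_cubic_affine_substitution:
  fixes \<alpha> \<beta> t :: "'a::alg_closed_field"
  assumes "\<And>x. (\<alpha> * x + \<beta>) ^ 3 + a * (\<alpha> * x + \<beta>) + b = t * (x ^ 3 + a * x + b)"
    and "(3::'a) \<noteq> 0" and "\<alpha> \<noteq> 0"
  shows "\<beta> = 0" and "\<alpha> ^ 3 = t"
proof -
  have "[:\<beta> ^ 3 + a * \<beta> + b, 3 * \<alpha> * \<beta> ^ 2 + a * \<alpha>, 3 * \<alpha> ^ 2 * \<beta>, \<alpha> ^ 3:]
      = [:t * b, t * a, 0, t:]"
  proof (rule alg_closed_poly_eqI[of 1])
    fix x
    show "poly [:\<beta> ^ 3 + a * \<beta> + b, 3 * \<alpha> * \<beta> ^ 2 + a * \<alpha>, 3 * \<alpha> ^ 2 * \<beta>, \<alpha> ^ 3:] x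
        = poly [:t * b, t * a, 0, t:] x"
      using assms(1)[of x] by (simp add: algebra_simps power2_eq_square power3_eq_cube)
  qed simp_all
  then have "3 * \<alpha> ^ 2 * \<beta> = 0" and "\<alpha> ^ 3 = t"
    by simp_all
  with assms(2,3) show "\<beta> = 0" and "\<alpha> ^ 3 = t"
    by simp_all
qed

lemma ec_cubic_substitution_linear:
  fixes s t :: "'a::alg_closed_field poly"
  assumes curve: "\<And>x. poly s x ^ 3 + a * poly s x + b = poly t x ^ 2 * (x ^ 3 + a * x + b)"
    and "degree s = 1" and "(3::'a) \<noteq> 0"
  obtains \<alpha> \<tau> where "s = [:0, \<alpha>:]" "t = [:\<tau>:]" "\<alpha> \<noteq> 0" "\<tau> \<noteq> 0" "\<alpha> ^ 3 = \<tau> ^ 2"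
proof -
  obtain \<alpha> \<beta> where s: "s = [:\<beta>, \<alpha>:]" and "\<alpha> \<noteq> 0"
  proof -
    have "s = [:coeff s 0, coeff s 1:]"
      by (rule poly_eqI) (auto simp: coeff_pCons coeff_eq_0 \<open>degree s = 1\<close> split: nat.split)
    moreover have "coeff s 1 \<noteq> 0"
      using \<open>degree s = 1\<close> leading_coeff_0_iff[of s] by fastforce
    ultimately show thesis
      using that by blast
  qed
  have "s ^ 3 + [:a:] * s + [:b:] = t ^ 2 * ec_cubic a b"
    by (rule alg_closed_poly_eqI[of 1]) (use curve in simp_all)
  moreover have "degree (s ^ 3 + [:a:] * s + [:b:]) = 3"
    using \<open>\<alpha> \<noteq> 0\<close> by (simp add: s degree_add_eq_left degree_power_eq)
  ultimately have "degree t = 0"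
    by (cases "t = 0") (simp_all add: degree_mult_eq degree_power_eq)
  then obtain \<tau> where t: "t = [:\<tau>:]"
    by (rule degree_eq_zeroE)
  have "(\<alpha> * x + \<beta>) ^ 3 + a * (\<alpha> * x + \<beta>) + b = \<tau> ^ 2 * (x ^ 3 + a * x + b)" for x
    using curve[of x] by (simp add: s t algebra_simps)
  then have "\<beta> = 0" and "\<alpha> ^ 3 = \<tau> ^ 2"
    using ec_cubic_affine_substitution[OF _ assms(3) \<open>\<alpha> \<noteq> 0\<close>] by blast+
  moreover from this have "\<tau> \<noteq> 0"
    using \<open>\<alpha> \<noteq> 0\<close> by auto
  ultimately show ?thesis
    using that \<open>\<alpha> \<noteq> 0\<close> by (simp add: s t)
qed

section \<open>The pullback of the invariant differential\<close>

(* If theta(x, y) = (p/q, y u/v) then theta^*(dx/y) = (wronskian p q * v) / (q^2 * u) dx/y;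
   the divisibility says that this differential has no poles. *)
lemma wronskian_mult_dvd:
  fixes p q u v :: "'a::alg_closed_field poly"
  assumes "coprime p q" and "coprime u v" and "4 * a ^ 3 + 27 * b ^ 2 \<noteq> 0"
    and curve: "ec_cubic a b * u ^ 2 * q ^ 3 = ec_cubic_hom a b p q * v ^ 2"
  shows "q ^ 2 * u dvd wronskian p q * v"
proof -
  define F where "F = ec_cubic_hom a b p q"
  define G where "G = 3 * p ^ 2 + [:a:] * q ^ 2"
  have "coprime q F" and "coprime F G"
    using coprime_ec_cubic_hom[OF assms(1,3)] by (simp_all add: F_def G_def)
  have "coprime (u ^ 2) (v ^ 2)"
    using assms(2) by (simp add: alg_closed_coprime_iff_no_common_root)
  moreover have "u ^ 2 dvd F * v ^ 2"
    using curve by (metis F_def dvd_triv_left dvd_mult_left mult.commute)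
  ultimately have "u ^ 2 dvd F"
    by (rule alg_closed_coprime_dvd_mult_cancel)
  have "coprime (q ^ 3) F"
    using \<open>coprime q F\<close> by (simp add: alg_closed_coprime_iff_no_common_root)
  moreover have "q ^ 3 dvd v ^ 2 * F"
    using curve by (metis F_def dvd_triv_right mult.commute)
  ultimately have "q ^ 3 dvd v ^ 2"
    by (rule alg_closed_coprime_dvd_mult_cancel)
  have "u dvd F"
    using \<open>u ^ 2 dvd F\<close> by (simp add: power2_eq_square dvd_mult_left)
  have "u dvd G * wronskian p q"
  proof -
    have "u dvd pderiv F"
      using power_dvd_pderiv[OF \<open>u ^ 2 dvd F\<close>] by simp
    with \<open>u dvd F\<close> have "u dvd q * pderiv F - 3 * (pderiv q * F)"
      by (simp add: dvd_diff)
    then show ?thesis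
      by (simp add: ec_cubic_hom_euler F_def G_def)
  qed
  moreover have "coprime u G"
    by (rule coprime_divisors[OF \<open>u dvd F\<close> dvd_refl \<open>coprime F G\<close>])
  ultimately have "u dvd wronskian p q"
    by (metis alg_closed_coprime_dvd_mult_cancel mult.commute)
  moreover have "q ^ 2 dvd wronskian p q * v"
    using \<open>q ^ 3 dvd v ^ 2\<close> by (rule square_dvd_wronskian_mult)
  moreover have "coprime (q ^ 2) u"
    using \<open>coprime q F\<close> \<open>u dvd F\<close> by (auto simp: alg_closed_coprime_iff_no_common_root elim!: dvdE)
  ultimately show ?thesis
    by (simp add: alg_closed_mult_dvd_if_coprime)
qed

(* ... and no pole at infinity either, so it is a constant multiple of dx/y. *)
lemma degree_wronskian_mult_le:
  fixes p q u v :: "'a::idom poly"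
  assumes curve: "ec_cubic a b * u ^ 2 * q ^ 3 = ec_cubic_hom a b p q * v ^ 2"
    and "q \<noteq> 0" and "v \<noteq> 0"
    and deg: "2 * degree p + degree q < degree (ec_cubic_hom a b p q)"
  shows "degree (wronskian p q * v) \<le> degree (q ^ 2 * u)"
proof (cases "wronskian p q = 0")
  case False
  have "ec_cubic_hom a b p q \<noteq> 0"
    using deg by auto
  with curve assms(3) have "u \<noteq> 0"
    by auto
  have "3 + 2 * degree u + 3 * degree q = degree (ec_cubic_hom a b p q) + 2 * degree v"
    using arg_cong[OF curve, of degree] \<open>u \<noteq> 0\<close> assms(2,3) \<open>ec_cubic_hom a b p q \<noteq> 0\<close>
    by (simp add: degree_mult_eq degree_power_eq)
  moreover have "degree (wronskian p q) < degree p + degree q"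
    using False by (rule degree_wronskian_less)
  ultimately show ?thesis
    using False deg \<open>u \<noteq> 0\<close> assms(2,3) by (simp add: degree_mult_eq degree_power_eq)
qed simp

lemma wronskian_mult_eq_smult:
  fixes p q u v :: "'a::alg_closed_field poly"
  assumes "coprime p q" "q \<noteq> 0" "coprime u v" "v \<noteq> 0"
    and disc: "4 * a ^ 3 + 27 * b ^ 2 \<noteq> 0"
    and curve: "ec_cubic a b * u ^ 2 * q ^ 3 = ec_cubic_hom a b p q * v ^ 2"
    and deg: "2 * degree p + degree q < degree (ec_cubic_hom a b p q)"
  obtains h where "wronskian p q * v = smult h (q ^ 2 * u)"
proof -
  have "u \<noteq> 0"
    using curve deg assms(4) by auto
  with assms(2) have "q ^ 2 * u \<noteq> 0"
    by simp
  then show ?thesis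
    using that eq_smult_if_dvd_degree_le wronskian_mult_dvd[OF assms(1,3) disc curve]
      degree_wronskian_mult_le[OF curve assms(2,4) deg] by blast
qed

lemma wronskian_eq_0_if_scale_equivariant:
  fixes p q u v :: "'a::alg_closed_field poly"
  assumes "coprime p q" "q \<noteq> 0" "coprime u v" "v \<noteq> 0"
    and h: "wronskian p q * v = smult h (q ^ 2 * u)"
    and scale_pq: "p \<circ>\<^sub>p [:0, c:] * q = smult k (p * q \<circ>\<^sub>p [:0, c:])"
    and scale_uv: "u \<circ>\<^sub>p [:0, c:] * v = smult l (u * v \<circ>\<^sub>p [:0, c:])"
    and "c \<noteq> 0" "k \<noteq> 0" "l \<noteq> 0" "k \<noteq> c * l"
  shows "wronskian p q = 0"
proof -
  let ?w = "wronskian p q"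
  obtain \<rho> where "\<rho> \<noteq> 0" and \<rho>: "q \<circ>\<^sub>p [:0, c:] = smult \<rho> q" "p \<circ>\<^sub>p [:0, c:] = smult (k * \<rho>) p"
    using pcompose_scale_eigen[OF assms(1,2) \<open>c \<noteq> 0\<close> \<open>k \<noteq> 0\<close> scale_pq] by blast
  obtain \<sigma> where "\<sigma> \<noteq> 0" and \<sigma>: "v \<circ>\<^sub>p [:0, c:] = smult \<sigma> v" "u \<circ>\<^sub>p [:0, c:] = smult (l * \<sigma>) u"
    using pcompose_scale_eigen[OF assms(3,4) \<open>c \<noteq> 0\<close> \<open>l \<noteq> 0\<close> scale_uv] by blast
  have "smult c (?w \<circ>\<^sub>p [:0, c:]) = wronskian (p \<circ>\<^sub>p [:0, c:]) (q \<circ>\<^sub>p [:0, c:])"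
    by (rule wronskian_pcompose_scale[symmetric])
  also have "\<dots> = smult (k * \<rho> ^ 2) ?w"
    by (simp add: \<rho> wronskian_smult power2_eq_square mult.assoc)
  finally have w: "smult c (?w \<circ>\<^sub>p [:0, c:]) = smult (k * \<rho> ^ 2) ?w" .
  have "smult c ((?w * v) \<circ>\<^sub>p [:0, c:]) = smult c (?w \<circ>\<^sub>p [:0, c:]) * smult \<sigma> v"
    by (simp add: pcompose_mult \<sigma> mult.commute)
  also have "\<dots> = smult (k * \<rho> ^ 2 * \<sigma>) (?w * v)"
    by (simp add: w mult_ac)
  finally have "smult c ((?w * v) \<circ>\<^sub>p [:0, c:]) = smult (k * \<rho> ^ 2 * \<sigma>) (?w * v)" .
  moreover have "smult c ((?w * v) \<circ>\<^sub>p [:0, c:]) = smult (c * l * \<rho> ^ 2 * \<sigma>) (?w * v)"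
  proof -
    have "smult c ((smult h (q ^ 2 * u)) \<circ>\<^sub>p [:0, c:])
        = smult (c * l * \<rho> ^ 2 * \<sigma>) (smult h (q ^ 2 * u))"
      by (simp add: pcompose_smult pcompose_mult \<rho> \<sigma> power2_eq_square mult_ac)
    then show ?thesis
      by (simp only: h)
  qed
  ultimately have "smult ((k - c * l) * \<rho> ^ 2 * \<sigma>) (?w * v) = 0"
    by (simp add: left_diff_distrib smult_diff_left)
  moreover have "(k - c * l) * \<rho> ^ 2 * \<sigma> \<noteq> 0"
    using \<open>\<rho> \<noteq> 0\<close> \<open>\<sigma> \<noteq> 0\<close> \<open>k \<noteq> c * l\<close> by simp
  ultimately show ?thesis
    using assms(4) by simp
qed

section \<open>Points and endomorphisms\<close>

lemma on_curve_Pt_iff: "on_curve a b (Pt x y) \<longleftrightarrow> y ^ 2 = poly (ec_cubic a b) x"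
  by (simp add: on_curve_def)

lemma ex_on_curve_Pt: "\<exists>y. on_curve a b (Pt x (y :: 'a::alg_closed_field))"
  using nth_root_exists[of 2 "x ^ 3 + a * x + b"] by (auto simp: on_curve_def)

lemma ex_Pt_nonzero_coords:
  obtains x y :: "'a::alg_closed_field" where "on_curve a b (Pt x y)" "x \<noteq> 0" "y \<noteq> 0"
proof -
  obtain x where "poly ([:0, 1:] * ec_cubic a b) x \<noteq> 0"
    using alg_closed_poly_all_0_iff_0[of "[:0, 1:] * ec_cubic a b"] by auto
  moreover obtain y where "on_curve a b (Pt x y)"
    using ex_on_curve_Pt by blast
  ultimately have "x \<noteq> 0" and "y \<noteq> 0"
    by (auto simp: on_curve_Pt_iff)
  with \<open>on_curve a b (Pt x y)\<close> show ?thesis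
    by (rule that)
qed

lemma ec_add_self_neq: "ec_add a b (Pt x y) (Pt x y) \<noteq> Pt x y"
proof
  assume double: "ec_add a b (Pt x y) (Pt x y) = Pt x y"
  show False
  proof (cases "y = - y")
    case False
    define l where "l = (3 * x ^ 2 + a) / (2 * y)"
    have "ec_add a b (Pt x y) (Pt x y) = Pt (l ^ 2 - 2 * x) (l * (x - (l ^ 2 - 2 * x)) - y)"
      using False by (simp add: l_def Let_def)
    with double have "l ^ 2 - 2 * x = x" and "l * (x - (l ^ 2 - 2 * x)) - y = y"
      by simp_all
    then have "y = - y"
      by simp
    with False show False ..
  qed (use double in simp)
qed

lemma ec_add_self_on_curve:
  fixes x y :: "'a::field"
  assumes "on_curve a b (Pt x y)" and "y \<noteq> - y"
  shows "on_curve a b (ec_add a b (Pt x y) (Pt x y))"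
proof -
  define l where "l = (3 * x ^ 2 + a) / (2 * y)"
  have "2 * y \<noteq> 0"
    using assms(2) by (metis mult_2 add_eq_0_iff)
  then have "2 * y * l = 3 * x ^ 2 + a"
    by (simp add: l_def)
  moreover have "y ^ 2 = x ^ 3 + a * x + b"
    using assms(1) by (simp add: on_curve_def)
  ultimately have
    "(l * (x - (l ^ 2 - 2 * x)) - y) ^ 2 = (l ^ 2 - 2 * x) ^ 3 + a * (l ^ 2 - 2 * x) + b"
    by algebra
  moreover have "ec_add a b (Pt x y) (Pt x y) = Pt (l ^ 2 - 2 * x) (l * (x - (l ^ 2 - 2 * x)) - y)"
    using assms(2) by (simp add: l_def Let_def)
  ultimately show ?thesis
    by (simp add: on_curve_def)
qed

lemma is_endo_Infty:
  assumes "is_endo a b \<theta>"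
  shows "\<theta> Infty = Infty"
proof (cases "\<theta> Infty")
  case (Pt x y)
  have "on_curve a b Infty"
    by (simp add: on_curve_def)
  with assms have "\<theta> (ec_add a b Infty Infty) = ec_add a b (\<theta> Infty) (\<theta> Infty)"
    unfolding is_endo_def by blast
  with Pt ec_add_self_neq[of a b x y] show ?thesis
    by (simp only: ec_add.simps(1)) simp
qed

lemma is_endo_not_constant_on_affine:
  fixes \<theta> :: "'a::alg_closed_field ecpt \<Rightarrow> 'a ecpt"
  assumes "is_endo a b \<theta>" and "(2::'a) \<noteq> 0"
  shows "\<not> (\<forall>x y. on_curve a b (Pt x y) \<longrightarrow> \<theta> (Pt x y) = Pt x0 y0)"
proof
  assume const: "\<forall>x y. on_curve a b (Pt x y) \<longrightarrow> \<theta> (Pt x y) = Pt x0 y0"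
  obtain x y where xy: "on_curve a b (Pt x y)" "y \<noteq> 0"
    by (rule ex_Pt_nonzero_coords)
  with assms(2) have "y \<noteq> - y"
    by (metis add_eq_0_iff mult_2 mult_eq_0_iff)
  define P2 where "P2 = ec_add a b (Pt x y) (Pt x y)"
  have "on_curve a b P2"
    unfolding P2_def using xy(1) \<open>y \<noteq> - y\<close> by (rule ec_add_self_on_curve)
  moreover obtain x2 y2 where "P2 = Pt x2 y2"
    using \<open>y \<noteq> - y\<close> by (simp add: P2_def Let_def)
  ultimately have "\<theta> P2 = Pt x0 y0"
    using const by simp
  moreover have "\<theta> P2 = ec_add a b (Pt x0 y0) (Pt x0 y0)"
    using assms(1) xy(1) const unfolding P2_def is_endo_def by metis
  ultimately show False
    using ec_add_self_neq by metis
qed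

lemma endo_rep_Pt:
  assumes "endo_rep a b \<theta> p q u v" and "on_curve a b (Pt x y)"
  shows "\<theta> (Pt x y) = (if poly q x = 0 then Infty
      else Pt (poly p x / poly q x) (y * poly u x / poly v x))"
    and "poly q x \<noteq> 0 \<Longrightarrow> poly v x \<noteq> 0"
  using assms by (auto simp: endo_rep_def)

lemma endo_rep_eq_Infty_iff:
  assumes "endo_rep a b \<theta> p q u v" and "on_curve a b (Pt x y)"
  shows "\<theta> (Pt x y) = Infty \<longleftrightarrow> poly q x = 0"
  using endo_rep_Pt[OF assms] by simp

(* All representations of theta give the same degree, so the THE in ec_deg is determined. *)
lemma ec_deg_eq:
  fixes \<theta> :: "'a::alg_closed_field ecpt \<Rightarrow> 'a ecpt"
  assumes rep: "endo_rep a b \<theta> p q u v" and "q \<noteq> 0"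
  shows "ec_deg a b \<theta> = max (degree p) (degree q)"
  unfolding ec_deg_def
proof (rule the_equality)
  fix n
  assume "\<exists>p' q' u' v'. endo_rep a b \<theta> p' q' u' v' \<and> n = max (degree p') (degree q')"
  then obtain p' q' u' v' where rep': "endo_rep a b \<theta> p' q' u' v'"
    and n: "n = max (degree p') (degree q')"
    by blast
  have same_roots: "poly q x = 0 \<longleftrightarrow> poly q' x = 0" for x
    using ex_on_curve_Pt endo_rep_eq_Infty_iff[OF rep] endo_rep_eq_Infty_iff[OF rep'] by metis
  then have "q' \<noteq> 0"
    using \<open>q \<noteq> 0\<close> alg_closed_poly_all_0_iff_0 by force
  have "p * q' = p' * q"
  proof (rule alg_closed_poly_eqI[OF \<open>q \<noteq> 0\<close>])
    fix x
    assume qx: "poly q x \<noteq> 0"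
    then have q'x: "poly q' x \<noteq> 0"
      using same_roots by blast
    obtain y where "on_curve a b (Pt x y)"
      using ex_on_curve_Pt by blast
    then have "poly p x / poly q x = poly p' x / poly q' x"
      using endo_rep_Pt(1)[OF rep] endo_rep_Pt(1)[OF rep'] qx q'x by (metis ecpt.inject)
    then show "poly (p * q') x = poly (p' * q) x"
      using qx q'x by (simp add: field_simps)
  qed
  with rep rep' \<open>q \<noteq> 0\<close> \<open>q' \<noteq> 0\<close> show "n = max (degree p) (degree q)"
    using fraction_degrees_unique[of p q p' q'] by (simp add: n endo_rep_def)
qed (use rep in blast)

lemma is_endo_obtain_reduced_rep:
  fixes \<theta> :: "'a::alg_closed_field ecpt \<Rightarrow> 'a ecpt"
  assumes "is_endo a b \<theta>" and "\<exists>P. on_curve a b P \<and> \<theta> P \<noteq> Infty"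
  obtains p q u v where "endo_rep a b \<theta> p q u v" "q \<noteq> 0" "v \<noteq> 0" "coprime u v"
proof -
  obtain p q u0 v0 where rep: "endo_rep a b \<theta> p q u0 v0"
    using assms(1) by (auto simp: is_endo_def)
  obtain x y where "on_curve a b (Pt x y)" "\<theta> (Pt x y) \<noteq> Infty"
    using assms is_endo_Infty by (metis ecpt.exhaust)
  then have "poly q x \<noteq> 0"
    using endo_rep_eq_Infty_iff[OF rep] by blast
  then have "q \<noteq> 0" and "v0 \<noteq> 0"
    using endo_rep_Pt(2)[OF rep \<open>on_curve a b (Pt x y)\<close>] by auto
  then obtain g u v where "g \<noteq> 0" "u0 = g * u" "v0 = g * v" "coprime u v"
    using alg_closed_coprime_factorization by blast
  moreover have "endo_rep a b \<theta> p q u v"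
    using rep \<open>u0 = g * u\<close> \<open>v0 = g * v\<close> by (auto simp: endo_rep_def)
  ultimately show ?thesis
    using that \<open>q \<noteq> 0\<close> \<open>v0 \<noteq> 0\<close> by auto
qed

lemma endo_rep_curve_eq:
  fixes \<theta> :: "'a::alg_closed_field ecpt \<Rightarrow> 'a ecpt"
  assumes "is_endo a b \<theta>" and rep: "endo_rep a b \<theta> p q u v" and "q \<noteq> 0"
  shows "ec_cubic a b * u ^ 2 * q ^ 3 = ec_cubic_hom a b p q * v ^ 2"
proof (rule alg_closed_poly_eqI[OF \<open>q \<noteq> 0\<close>])
  fix x
  assume "poly q x \<noteq> 0"
  obtain y where y: "on_curve a b (Pt x y)"
    using ex_on_curve_Pt by blast
  then have "on_curve a b (\<theta> (Pt x y))"
    using assms(1) by (simp add: is_endo_def)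
  then have "(y * poly u x / poly v x) ^ 2
      = (poly p x / poly q x) ^ 3 + a * (poly p x / poly q x) + b"
    using endo_rep_Pt[OF rep y] \<open>poly q x \<noteq> 0\<close> by (simp add: on_curve_def)
  moreover have "poly v x \<noteq> 0"
    using endo_rep_Pt(2)[OF rep y \<open>poly q x \<noteq> 0\<close>] .
  ultimately have
    "y ^ 2 * poly u x ^ 2 * poly q x ^ 3 = poly (ec_cubic_hom a b p q) x * poly v x ^ 2"
    using \<open>poly q x \<noteq> 0\<close> by (simp add: field_simps power2_eq_square power3_eq_cube)
  moreover have "poly (ec_cubic a b) x = y ^ 2"
    using y by (simp add: on_curve_Pt_iff)
  ultimately show "poly (ec_cubic a b * u ^ 2 * q ^ 3) x = poly (ec_cubic_hom a b p q * v ^ 2) x"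
    by (simp del: poly_ec_cubic poly_ec_cubic_hom)
qed

lemma endo_rep_numerator_neq_0:
  fixes \<theta> :: "'a::alg_closed_field ecpt \<Rightarrow> 'a ecpt"
  assumes "is_endo a b \<theta>" and rep: "endo_rep a b \<theta> p q u v"
    and "q \<noteq> 0" and "v \<noteq> 0" and "(2::'a) \<noteq> 0"
  shows "p \<noteq> 0"
proof
  assume "p = 0"
  then have curve: "ec_cubic a b * u ^ 2 * q ^ 3 = [:b:] * q ^ 3 * v ^ 2"
    using endo_rep_curve_eq[OF assms(1-3)] by (simp add: ec_cubic_hom_def)
  show False
  proof (cases "b = 0")
    case False
    with curve \<open>q \<noteq> 0\<close> \<open>v \<noteq> 0\<close> have "u \<noteq> 0"
      by auto
    have "degree (ec_cubic a b * u ^ 2 * q ^ 3) = 3 + 2 * degree u + 3 * degree q"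
      using \<open>u \<noteq> 0\<close> \<open>q \<noteq> 0\<close> by (simp add: degree_mult_eq degree_power_eq)
    moreover have "degree ([:b:] * q ^ 3 * v ^ 2) = 3 * degree q + 2 * degree v"
      using False \<open>q \<noteq> 0\<close> \<open>v \<noteq> 0\<close> by (simp add: degree_mult_eq degree_power_eq)
    ultimately have "3 + 2 * degree u + 3 * degree q = 3 * degree q + 2 * degree v"
      by (simp only: curve)
    then show False
      by presburger
  next
    case True
    with curve \<open>q \<noteq> 0\<close> have "u = 0"
      by simp
    have "coprime 0 q"
      using rep \<open>p = 0\<close> by (simp add: endo_rep_def)
    then have "poly q x \<noteq> 0" for x
      by (simp add: alg_closed_coprime_iff_no_common_root)
    then have "\<forall>x y. on_curve a b (Pt x y) \<longrightarrow> \<theta> (Pt x y) = Pt 0 0"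
      using endo_rep_Pt(1)[OF rep] \<open>p = 0\<close> \<open>u = 0\<close> by simp
    with is_endo_not_constant_on_affine[OF assms(1,5)] show False
      by blast
  qed
qed

lemma is_endo_polynomial_if_no_poles:
  fixes \<theta> :: "'a::alg_closed_field ecpt \<Rightarrow> 'a ecpt"
  assumes "is_endo a b \<theta>" and no_poles: "\<And>x y. on_curve a b (Pt x y) \<Longrightarrow> \<theta> (Pt x y) \<noteq> Infty"
  obtains s t where "\<And>x y. on_curve a b (Pt x y) \<Longrightarrow> \<theta> (Pt x y) = Pt (poly s x) (y * poly t x)"
proof -
  obtain p q u v where rep: "endo_rep a b \<theta> p q u v"
    using assms(1) by (auto simp: is_endo_def)
  have nonzero: "poly q x \<noteq> 0 \<and> poly v x \<noteq> 0" for x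
    using ex_on_curve_Pt endo_rep_Pt[OF rep] no_poles by metis
  then have "degree q = 0" and "degree v = 0"
    using alg_closed_imp_poly_has_root by blast+
  then obtain c d where "q = [:c:]" "v = [:d:]"
    by (metis degree_eq_zeroE)
  then have "\<theta> (Pt x y) = Pt (poly (smult (inverse c) p) x) (y * poly (smult (inverse d) u) x)"
    if "on_curve a b (Pt x y)" for x y
    using endo_rep_Pt(1)[OF rep that] nonzero[of x] by (simp add: field_simps)
  then show ?thesis
    using that by blast
qed

section \<open>Automorphisms\<close>

lemma automorphism_is_scaling:
  fixes \<phi> \<psi> :: "'a::alg_closed_field ecpt \<Rightarrow> 'a ecpt"
  assumes "is_endo a b \<phi>" and "is_endo a b \<psi>"
    and inverse: "\<forall>P. on_curve a b P \<longrightarrow> \<psi> (\<phi> P) = P \<and> \<phi> (\<psi> P) = P"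
    and "(3::'a) \<noteq> 0"
  obtains \<alpha> \<tau> where "\<alpha> \<noteq> 0" "\<tau> \<noteq> 0" "\<alpha> ^ 3 = \<tau> ^ 2"
    "\<And>x y. on_curve a b (Pt x y) \<Longrightarrow> \<phi> (Pt x y) = Pt (\<alpha> * x) (\<tau> * y)"
proof -
  have no_poles: "\<phi> (Pt x y) \<noteq> Infty" "\<psi> (Pt x y) \<noteq> Infty" if "on_curve a b (Pt x y)" for x y
    using that inverse is_endo_Infty[OF assms(1)] is_endo_Infty[OF assms(2)]
    by (metis ecpt.distinct(1))+
  obtain s t where \<phi>: "\<And>x y. on_curve a b (Pt x y) \<Longrightarrow> \<phi> (Pt x y) = Pt (poly s x) (y * poly t x)"
    using is_endo_polynomial_if_no_poles[OF assms(1)] no_poles(1) by blast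
  obtain s' t' where \<psi>: "\<And>x y. on_curve a b (Pt x y) \<Longrightarrow> \<psi> (Pt x y) = Pt (poly s' x) (y * poly t' x)"
    using is_endo_polynomial_if_no_poles[OF assms(2)] no_poles(2) by blast
  have on_curve_\<phi>: "on_curve a b (Pt (poly s x) (y * poly t x))" if "on_curve a b (Pt x y)" for x y
    using assms(1) that \<phi>[OF that] by (metis is_endo_def)
  have "s' \<circ>\<^sub>p s = [:0, 1:]"
  proof (rule alg_closed_poly_eqI[of 1])
    fix x
    obtain y where y: "on_curve a b (Pt x y)"
      using ex_on_curve_Pt by blast
    then have "\<psi> (\<phi> (Pt x y)) = Pt x y"
      using inverse by blast
    then show "poly (s' \<circ>\<^sub>p s) x = poly [:0, 1:] x"
      using \<phi>[OF y] \<psi>[OF on_curve_\<phi>[OF y]] by (simp add: poly_pcompose)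
  qed simp
  then have "degree s = 1"
    using degree_pcompose[of s' s] by simp
  moreover have "poly s x ^ 3 + a * poly s x + b = poly t x ^ 2 * (x ^ 3 + a * x + b)" for x
  proof -
    obtain y where y: "on_curve a b (Pt x y)"
      using ex_on_curve_Pt by blast
    with on_curve_\<phi>[OF y] show ?thesis
      by (simp add: on_curve_def power_mult_distrib mult.commute)
  qed
  ultimately obtain \<alpha> \<tau> where "s = [:0, \<alpha>:]" "t = [:\<tau>:]" "\<alpha> \<noteq> 0" "\<tau> \<noteq> 0" "\<alpha> ^ 3 = \<tau> ^ 2"
    using ec_cubic_substitution_linear assms(4) by metis
  with \<phi> show ?thesis
    using that by (simp add: mult.commute)
qed

lemma automorphism_pair_scaling:
  fixes \<phi> \<psi> :: "'a::alg_closed_field ecpt \<Rightarrow> 'a ecpt"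
  assumes "is_endo a b \<phi>" and "is_endo a b \<psi>"
    and inverse: "\<forall>P. on_curve a b P \<longrightarrow> \<psi> (\<phi> P) = P \<and> \<phi> (\<psi> P) = P"
    and "(3::'a) \<noteq> 0"
  obtains \<alpha> \<tau> where "\<alpha> \<noteq> 0" "\<tau> \<noteq> 0" "\<alpha> ^ 3 = \<tau> ^ 2"
    "\<And>x y. on_curve a b (Pt x y) \<Longrightarrow> \<phi> (Pt x y) = Pt (\<alpha> * x) (\<tau> * y)"
    "\<And>x y. on_curve a b (Pt x y) \<Longrightarrow> \<psi> (Pt x y) = Pt (x / \<alpha>) (y / \<tau>)"
proof -
  obtain \<alpha> \<tau> where "\<alpha> \<noteq> 0" "\<tau> \<noteq> 0" "\<alpha> ^ 3 = \<tau> ^ 2"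
    and \<phi>: "\<And>x y. on_curve a b (Pt x y) \<Longrightarrow> \<phi> (Pt x y) = Pt (\<alpha> * x) (\<tau> * y)"
    using automorphism_is_scaling[OF assms] by (metis (no_types))
  have "\<forall>P. on_curve a b P \<longrightarrow> \<phi> (\<psi> P) = P \<and> \<psi> (\<phi> P) = P"
    using inverse by blast
  then obtain \<alpha>' \<tau>' where "\<alpha>' \<noteq> 0" "\<tau>' \<noteq> 0" "\<alpha>' ^ 3 = \<tau>' ^ 2"
    and \<psi>: "\<And>x y. on_curve a b (Pt x y) \<Longrightarrow> \<psi> (Pt x y) = Pt (\<alpha>' * x) (\<tau>' * y)"
    using automorphism_is_scaling[OF assms(2,1) _ assms(4)] by (metis (no_types))
  obtain x y where xy: "on_curve a b (Pt x y)" "x \<noteq> 0" "y \<noteq> 0"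
    by (rule ex_Pt_nonzero_coords)
  have "on_curve a b (\<phi> (Pt x y))"
    using assms(1) xy(1) unfolding is_endo_def by blast
  then have "on_curve a b (Pt (\<alpha> * x) (\<tau> * y))"
    by (simp add: \<phi>[OF xy(1)])
  moreover have "\<psi> (\<phi> (Pt x y)) = Pt x y"
    using inverse xy(1) by blast
  ultimately have "Pt (\<alpha>' * (\<alpha> * x)) (\<tau>' * (\<tau> * y)) = Pt x y"
    by (simp add: \<phi>[OF xy(1)] \<psi>)
  then have "\<alpha>' = 1 / \<alpha>" and "\<tau>' = 1 / \<tau>"
    using xy(2,3) \<open>\<alpha> \<noteq> 0\<close> \<open>\<tau> \<noteq> 0\<close> by (simp_all add: field_simps)
  with \<psi> have "\<And>x y. on_curve a b (Pt x y) \<Longrightarrow> \<psi> (Pt x y) = Pt (x / \<alpha>) (y / \<tau>)"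
    by simp
  with that \<open>\<alpha> \<noteq> 0\<close> \<open>\<tau> \<noteq> 0\<close> \<open>\<alpha> ^ 3 = \<tau> ^ 2\<close> \<phi> show ?thesis
    by blast
qed

lemma scaling_neq_1_if_nontrivial:
  assumes "\<phi> Infty = Infty"
    and \<phi>: "\<And>x y. on_curve a b (Pt x y) \<Longrightarrow> \<phi> (Pt x y) = Pt (\<alpha> * x) (\<tau> * y)"
    and "\<alpha> ^ 3 = \<tau> ^ 2"
    and "\<exists>P. on_curve a b P \<and> \<phi> P \<noteq> P" and "\<exists>P. on_curve a b P \<and> \<phi> P \<noteq> ec_neg P"
  shows "\<alpha> \<noteq> 1"
proof
  assume "\<alpha> = 1"
  with assms(3) have "\<tau> ^ 2 = 1"
    by simp
  then consider "\<tau> = 1" | "\<tau> = -1"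
    using power2_eq_1_iff by blast
  then show False
  proof cases
    case 1
    obtain P where "on_curve a b P" "\<phi> P \<noteq> P"
      using assms(4) by blast
    with assms(1) \<phi> \<open>\<alpha> = 1\<close> 1 show False
      by (cases P) auto
  next
    case 2
    obtain P where "on_curve a b P" "\<phi> P \<noteq> ec_neg P"
      using assms(5) by blast
    with assms(1) \<phi> \<open>\<alpha> = 1\<close> 2 show False
      by (cases P) (auto simp: ec_neg_def)
  qed
qed

lemma endo_rep_commute_scaling_at:
  fixes \<theta> \<phi> \<phi>bar :: "'a::alg_closed_field ecpt \<Rightarrow> 'a ecpt"
  assumes "is_endo a b \<theta>" and rep: "endo_rep a b \<theta> p q u v"
    and "is_endo a b \<phi>" and "\<alpha> \<noteq> 0" and "\<tau> \<noteq> 0"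
    and \<phi>: "\<And>x y. on_curve a b (Pt x y) \<Longrightarrow> \<phi> (Pt x y) = Pt (\<alpha> * x) (\<tau> * y)"
    and \<phi>bar: "\<And>x y. on_curve a b (Pt x y) \<Longrightarrow> \<phi>bar (Pt x y) = Pt (x / \<alpha>) (y / \<tau>)"
    and commute: "\<forall>P. on_curve a b P \<longrightarrow> \<phi>bar (\<theta> P) = \<theta> (\<phi> P)"
    and q: "poly q x \<noteq> 0" "poly q (\<alpha> * x) \<noteq> 0" and "poly (ec_cubic a b) x \<noteq> 0"
  shows "\<alpha> * poly p (\<alpha> * x) * poly q x = poly p x * poly q (\<alpha> * x)"
    and "\<tau> ^ 2 * poly u (\<alpha> * x) * poly v x = poly u x * poly v (\<alpha> * x)"
proof -
  obtain y where y: "on_curve a b (Pt x y)"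
    using ex_on_curve_Pt by blast
  with \<open>poly (ec_cubic a b) x \<noteq> 0\<close> have "y \<noteq> 0"
    by (auto simp: on_curve_Pt_iff)
  have y': "on_curve a b (Pt (\<alpha> * x) (\<tau> * y))"
    using assms(3) y \<phi>[OF y] unfolding is_endo_def by metis
  have \<theta>: "\<theta> (Pt x y) = Pt (poly p x / poly q x) (y * poly u x / poly v x)"
    using endo_rep_Pt(1)[OF rep y] q(1) by simp
  have \<theta>': "\<theta> (Pt (\<alpha> * x) (\<tau> * y))
      = Pt (poly p (\<alpha> * x) / poly q (\<alpha> * x)) (\<tau> * y * poly u (\<alpha> * x) / poly v (\<alpha> * x))"
    using endo_rep_Pt(1)[OF rep y'] q(2) by simp
  have "on_curve a b (\<theta> (Pt x y))"
    using assms(1) y unfolding is_endo_def by blast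
  then have "\<phi>bar (\<theta> (Pt x y)) = Pt (poly p x / poly q x / \<alpha>) (y * poly u x / poly v x / \<tau>)"
    by (simp add: \<theta> \<phi>bar)
  moreover have "\<phi>bar (\<theta> (Pt x y)) = \<theta> (Pt (\<alpha> * x) (\<tau> * y))"
    using commute y \<phi>[OF y] by metis
  ultimately have "poly p x / poly q x / \<alpha> = poly p (\<alpha> * x) / poly q (\<alpha> * x)"
    and "y * poly u x / poly v x / \<tau> = \<tau> * y * poly u (\<alpha> * x) / poly v (\<alpha> * x)"
    by (simp_all add: \<theta>')
  moreover have "poly v x \<noteq> 0" "poly v (\<alpha> * x) \<noteq> 0"
    using endo_rep_Pt(2)[OF rep y q(1)] endo_rep_Pt(2)[OF rep y' q(2)] by simp_all
  ultimately show "\<alpha> * poly p (\<alpha> * x) * poly q x = poly p x * poly q (\<alpha> * x)"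
    and "\<tau> ^ 2 * poly u (\<alpha> * x) * poly v x = poly u x * poly v (\<alpha> * x)"
    using q \<open>y \<noteq> 0\<close> \<open>\<alpha> \<noteq> 0\<close> \<open>\<tau> \<noteq> 0\<close> by (auto simp: field_simps power2_eq_square)
qed

lemma endo_rep_commute_scaling:
  fixes \<theta> \<phi> \<phi>bar :: "'a::alg_closed_field ecpt \<Rightarrow> 'a ecpt"
  assumes "is_endo a b \<theta>" and rep: "endo_rep a b \<theta> p q u v"
    and "is_endo a b \<phi>" and "\<alpha> \<noteq> 0" and "\<tau> \<noteq> 0"
    and \<phi>: "\<And>x y. on_curve a b (Pt x y) \<Longrightarrow> \<phi> (Pt x y) = Pt (\<alpha> * x) (\<tau> * y)"
    and \<phi>bar: "\<And>x y. on_curve a b (Pt x y) \<Longrightarrow> \<phi>bar (Pt x y) = Pt (x / \<alpha>) (y / \<tau>)"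
    and commute: "\<forall>P. on_curve a b P \<longrightarrow> \<phi>bar (\<theta> P) = \<theta> (\<phi> P)"
    and "q \<noteq> 0"
  shows "p \<circ>\<^sub>p [:0, \<alpha>:] * q = smult (1 / \<alpha>) (p * q \<circ>\<^sub>p [:0, \<alpha>:])"
    and "u \<circ>\<^sub>p [:0, \<alpha>:] * v = smult (1 / \<tau> ^ 2) (u * v \<circ>\<^sub>p [:0, \<alpha>:])"
proof -
  define w where "w = q * q \<circ>\<^sub>p [:0, \<alpha>:] * ec_cubic a b"
  have "w \<noteq> 0"
    using \<open>q \<noteq> 0\<close> \<open>\<alpha> \<noteq> 0\<close> by (simp add: w_def pcompose_eq_0_iff)
  have commute_at: "\<alpha> * poly p (\<alpha> * x) * poly q x = poly p x * poly q (\<alpha> * x)"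
    "\<tau> ^ 2 * poly u (\<alpha> * x) * poly v x = poly u x * poly v (\<alpha> * x)" if "poly w x \<noteq> 0" for x
  proof -
    have "poly q x \<noteq> 0" "poly q (\<alpha> * x) \<noteq> 0" "poly (ec_cubic a b) x \<noteq> 0"
      using that by (simp_all add: w_def poly_pcompose mult.commute del: poly_ec_cubic)
    then show "\<alpha> * poly p (\<alpha> * x) * poly q x = poly p x * poly q (\<alpha> * x)"
      "\<tau> ^ 2 * poly u (\<alpha> * x) * poly v x = poly u x * poly v (\<alpha> * x)"
      using endo_rep_commute_scaling_at[OF assms(1-8)] by blast+
  qed
  show "p \<circ>\<^sub>p [:0, \<alpha>:] * q = smult (1 / \<alpha>) (p * q \<circ>\<^sub>p [:0, \<alpha>:])"
    by (rule alg_closed_poly_eqI[OF \<open>w \<noteq> 0\<close>])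
      (use commute_at(1) \<open>\<alpha> \<noteq> 0\<close> in \<open>simp add: poly_pcompose field_simps\<close>)
  show "u \<circ>\<^sub>p [:0, \<alpha>:] * v = smult (1 / \<tau> ^ 2) (u * v \<circ>\<^sub>p [:0, \<alpha>:])"
    by (rule alg_closed_poly_eqI[OF \<open>w \<noteq> 0\<close>])
      (use commute_at(2) \<open>\<tau> \<noteq> 0\<close> in \<open>simp add: poly_pcompose field_simps power2_eq_square\<close>)
qed

section \<open>Endomorphisms commuting with a non-trivial automorphism\<close>

theorem CHAR_le_ec_deg_if_commutes_with_scaling:
  fixes \<theta> \<phi> \<phi>bar :: "'a::alg_closed_field ecpt \<Rightarrow> 'a ecpt"
  assumes "is_endo a b \<theta>" and "\<exists>P. on_curve a b P \<and> \<theta> P \<noteq> Infty"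
    and "is_endo a b \<phi>" and "(2::'a) \<noteq> 0" and disc: "4 * a ^ 3 + 27 * b ^ 2 \<noteq> 0"
    and "\<alpha> \<noteq> 0" "\<tau> \<noteq> 0" "\<alpha> \<noteq> 1" "\<alpha> ^ 3 = \<tau> ^ 2"
    and \<phi>: "\<And>x y. on_curve a b (Pt x y) \<Longrightarrow> \<phi> (Pt x y) = Pt (\<alpha> * x) (\<tau> * y)"
    and \<phi>bar: "\<And>x y. on_curve a b (Pt x y) \<Longrightarrow> \<phi>bar (Pt x y) = Pt (x / \<alpha>) (y / \<tau>)"
    and commute: "\<forall>P. on_curve a b P \<longrightarrow> \<phi>bar (\<theta> P) = \<theta> (\<phi> P)"
  shows "CHAR('a) \<le> ec_deg a b \<theta>"
proof -
  obtain p q u v where rep: "endo_rep a b \<theta> p q u v" and "q \<noteq> 0" "v \<noteq> 0" "coprime u v"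
    using is_endo_obtain_reduced_rep[OF assms(1,2)] by blast
  have "coprime p q"
    using rep by (simp add: endo_rep_def)
  have "p \<noteq> 0"
    by (rule endo_rep_numerator_neq_0[OF assms(1) rep \<open>q \<noteq> 0\<close> \<open>v \<noteq> 0\<close> assms(4)])
  note scale = endo_rep_commute_scaling[OF assms(1) rep assms(3,6,7) \<phi> \<phi>bar commute \<open>q \<noteq> 0\<close>]
  have "degree p \<noteq> degree q"
    using pcompose_scale_ratio_eq_1[OF scale(1) \<open>p \<noteq> 0\<close> \<open>q \<noteq> 0\<close> \<open>\<alpha> \<noteq> 0\<close>] \<open>\<alpha> \<noteq> 1\<close> by auto
  moreover have "b \<noteq> 0 \<or> a \<noteq> 0"
    using disc by auto
  ultimately have deg: "2 * degree p + degree q < degree (ec_cubic_hom a b p q)"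
    using degree_ec_cubic_hom_gt \<open>p \<noteq> 0\<close> by blast
  obtain h where h: "wronskian p q * v = smult h (q ^ 2 * u)"
    using wronskian_mult_eq_smult[OF \<open>coprime p q\<close> \<open>q \<noteq> 0\<close> \<open>coprime u v\<close> \<open>v \<noteq> 0\<close> disc
        endo_rep_curve_eq[OF assms(1) rep \<open>q \<noteq> 0\<close>] deg] .
  have "1 / \<alpha> \<noteq> \<alpha> * (1 / \<tau> ^ 2)"
    using \<open>\<alpha> \<noteq> 1\<close> \<open>\<alpha> \<noteq> 0\<close> \<open>\<alpha> ^ 3 = \<tau> ^ 2\<close>
    by (auto simp: field_simps power2_eq_square power3_eq_cube)
  then have "wronskian p q = 0"
    using wronskian_eq_0_if_scale_equivariant[OF \<open>coprime p q\<close> \<open>q \<noteq> 0\<close> \<open>coprime u v\<close>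
        \<open>v \<noteq> 0\<close> h scale] \<open>\<alpha> \<noteq> 0\<close> \<open>\<tau> \<noteq> 0\<close>
    by simp
  with \<open>coprime p q\<close> \<open>q \<noteq> 0\<close> \<open>degree p \<noteq> degree q\<close> have "CHAR('a) \<le> max (degree p) (degree q)"
    by (intro CHAR_le_degree_if_wronskian_eq_0) auto
  then show ?thesis
    by (simp add: ec_deg_eq[OF rep \<open>q \<noteq> 0\<close>])
qed

theorem mainTheorem12:
  fixes p :: nat and a b :: "'k::alg_closed_field"
    and \<phi> \<phi>bar \<theta> :: "'k ecpt \<Rightarrow> 'k ecpt"
  assumes "prime p" and "p > 3" and "CHAR('k) = p"
    and "algebraic_over_prime_field TYPE('k)"
    and "(a = 0 \<and> b = -1 \<and> p mod 3 = 2) \<or> (a = -1 \<and> b = 0 \<and> p mod 4 = 3)"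
    and "is_endo a b \<phi>" and "is_endo a b \<phi>bar"
    and "\<forall>P. on_curve a b P \<longrightarrow> \<phi>bar (\<phi> P) = P \<and> \<phi> (\<phi>bar P) = P"
    and "\<exists>P. on_curve a b P \<and> \<phi> P \<noteq> P"
    and "\<exists>P. on_curve a b P \<and> \<phi> P \<noteq> ec_neg P"
    and "is_endo a b \<theta>"
    and "\<exists>P. on_curve a b P \<and> \<theta> P \<noteq> Infty"
    and "\<forall>P. on_curve a b P \<longrightarrow> \<phi>bar (\<theta> P) = \<theta> (\<phi> P)"
  shows "ec_deg a b \<theta> \<ge> p"
proof -
  have "(2::'k) \<noteq> 0" and "(3::'k) \<noteq> 0"
    using assms(2,3) of_nat_eq_0_iff_char_dvd[where 'a='k, of 2]
      of_nat_eq_0_iff_char_dvd[where 'a='k, of 3]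
    by (auto dest: dvd_imp_le)
  moreover have "(27::'k) = 3 ^ 3" and "(4::'k) = 2 ^ 2"
    by simp_all
  ultimately have "(27::'k) \<noteq> 0" and "(4::'k) \<noteq> 0"
    by (metis power_not_zero)+
  with assms(5) have disc: "4 * a ^ 3 + 27 * b ^ 2 \<noteq> 0"
    by auto
  obtain \<alpha> \<tau> where "\<alpha> \<noteq> 0" "\<tau> \<noteq> 0" "\<alpha> ^ 3 = \<tau> ^ 2"
    and \<phi>: "\<And>x y. on_curve a b (Pt x y) \<Longrightarrow> \<phi> (Pt x y) = Pt (\<alpha> * x) (\<tau> * y)"
    and \<phi>bar: "\<And>x y. on_curve a b (Pt x y) \<Longrightarrow> \<phi>bar (Pt x y) = Pt (x / \<alpha>) (y / \<tau>)"
    using automorphism_pair_scaling[OF assms(6-8) \<open>(3::'k) \<noteq> 0\<close>] by (metis (no_types))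
  moreover have "\<alpha> \<noteq> 1"
    using scaling_neq_1_if_nontrivial[OF is_endo_Infty[OF assms(6)] \<phi>] \<open>\<alpha> ^ 3 = \<tau> ^ 2\<close> assms(9,10)
    by blast
  ultimately have "CHAR('k) \<le> ec_deg a b \<theta>"
    using CHAR_le_ec_deg_if_commutes_with_scaling[OF assms(11,12,6) \<open>(2::'k) \<noteq> 0\<close> disc]
      assms(13) by blast
  with assms(3) show ?thesis
    by simp
qed

end
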